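(* Let $\mathbb{L}=(\mathcal{P},\mathcal{C},\parallel)$ be a Laguerre plane satisfying axioms (C) and (S). If $K,L,M,N$ are circles and $a,b,c,d$ are points such that $K\cap L=\{a\}$, $L\cap M=\{b\}$, $M\cap N=\{c\}$, $N\cap K=\{d\}$, then $(a,c,b,d)_{\triangle}$.
   Context: A Laguerre plane is a triple $(\mathcal{P},\mathcal{C},\parallel)$ where $\mathcal{P}$ is a set of points, $\mathcal{C}\subset 2^{\mathcal{P}}$ a set of circles and $\parallel$ an equivalence relation on $\mathcal{P}$ (parallelism; its classes are called generators) such that: (1) any three pairwise non-parallel points lie on a unique circle; (2) for every circle $K$ and non-parallel points $p\in K$, $q\notin K$ there is exactly one circle $L$ with $q\in L$ and $K\cap L=\{p\}$; (3) for every point $p$ and circle $K$ there is exactly one point $q\in K$ with $q\parallel p$; (4) some circle contains at least three but not all points. Circles $K,L$ are tangent at $p$ if $K\cap L=\{p\}$ or $K=L$ (with $p\in K$). For $p\in K$, $\langle p,K\rangle$ denotes the set of circles tangent to $K$ at $p$. Axiom (C): for any circles $K,L$ and any point $p\in K\setminus L$ there exists exactly one circle $M\in\langle p,K\rangle$ with $|M\cap L|=1$. Axiom (S): if $K,L,M,N$ are circles and $a,b,c,d$ points with $K\cap L=\{a\}$, $L\cap M=\{b\}$, $M\cap N=\{c\}$, $N\cap K=\{d\}$ and $a\nparallel c$, then there is a circle containing $a,b,c,d$. A quadruple $(a,b,c,d)$ of points is concyclic, written $(a,b,c,d)_{\triangle}$, if $a,b,c,d$ lie on a common circle, or $a\parallel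 b$, $c\parallel d$ and $a\nparallel c$. *)

theory Defs
  imports Main
begin

definition laguerre_plane :: "'p set \<Rightarrow> 'p set set \<Rightarrow> ('p \<Rightarrow> 'p \<Rightarrow> bool) \<Rightarrow> bool" where
  "laguerre_plane P C par \<longleftrightarrow>
     (\<forall>K\<in>C. K \<subseteq> P) \<and>
     equiv P {(x, y). x \<in> P \<and> y \<in> P \<and> par x y} \<and>
     (\<forall>x y. par x y \<longrightarrow> x \<in> P \<and> y \<in> P) \<and>
     \<comment> \<open>(1)\<close>
     (\<forall>p\<in>P. \<forall>q\<in>P. \<forall>r\<in>P. \<not> par p q \<and> \<not> par q r \<and> \<not> par p r \<longrightarrow>
        (\<exists>!K. K \<in> C \<and> p \<in> K \<and> q \<in> K \<and> r \<in> K)) \<and>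
     \<comment> \<open>(2)\<close>
     (\<forall>K\<in>C. \<forall>p\<in>K. \<forall>q\<in>P. q \<notin> K \<and> \<not> par p q \<longrightarrow>
        (\<exists>!L. L \<in> C \<and> q \<in> L \<and> K \<inter> L = {p})) \<and>
     \<comment> \<open>(3)\<close>
     (\<forall>p\<in>P. \<forall>K\<in>C. \<exists>!q. q \<in> K \<and> par q p) \<and>
     \<comment> \<open>(4)\<close>
     (\<exists>K\<in>C. (\<exists>x y z. x \<in> K \<and> y \<in> K \<and> z \<in> K \<and> x \<noteq> y \<and> y \<noteq> z \<and> x \<noteq> z) \<and> K \<noteq> P)"

definition tangent_at :: "'p set \<Rightarrow> 'p set \<Rightarrow> 'p \<Rightarrow> bool" where
  "tangent_at K L p \<longleftrightarrow> K \<inter> L = {p} \<or> (K = L \<and> p \<in> K)"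

definition tangent_pencil :: "'p set set \<Rightarrow> 'p \<Rightarrow> 'p set \<Rightarrow> 'p set set" where
  "tangent_pencil C p K = {M \<in> C. tangent_at M K p}"

definition axiom_C :: "'p set \<Rightarrow> 'p set set \<Rightarrow> ('p \<Rightarrow> 'p \<Rightarrow> bool) \<Rightarrow> bool" where
  "axiom_C P C par \<longleftrightarrow>
     (\<forall>K\<in>C. \<forall>L\<in>C. \<forall>p. p \<in> K \<and> p \<notin> L \<longrightarrow>
        (\<exists>!M. M \<in> tangent_pencil C p K \<and> card (M \<inter> L) = 1))"

definition axiom_S :: "'p set \<Rightarrow> 'p set set \<Rightarrow> ('p \<Rightarrow> 'p \<Rightarrow> bool) \<Rightarrow> bool" where
  "axiom_S P C par \<longleftrightarrow>
     (\<forall>K\<in>C. \<forall>L\<in>C. \<forall>M\<in>C. \<forall>N\<in>C. \<forall>a b c d.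
        K \<inter> L = {a} \<and> L \<inter> M = {b} \<and> M \<inter> N = {c} \<and> N \<inter> K = {d} \<and> \<not> par a c \<longrightarrow>
        (\<exists>Z\<in>C. a \<in> Z \<and> b \<in> Z \<and> c \<in> Z \<and> d \<in> Z))"

definition concyclic :: "'p set set \<Rightarrow> ('p \<Rightarrow> 'p \<Rightarrow> bool) \<Rightarrow> 'p \<Rightarrow> 'p \<Rightarrow> 'p \<Rightarrow> 'p \<Rightarrow> bool" where
  "concyclic C par a b c d \<longleftrightarrow>
     (\<exists>Z\<in>C. a \<in> Z \<and> b \<in> Z \<and> c \<in> Z \<and> d \<in> Z) \<or>
     (par a b \<and> par c d \<and> \<not> par a c)"

end

theory Submission
  imports Defs
begin

text \<open>If \<open>a\<close> and \<open>c\<close> are not parallel, axiom (S) applied to \<open>K, L, M, N\<close> yields the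
  circle; if \<open>b\<close> and \<open>d\<close> are not parallel, so does (S) applied to the rotated quadruple
  \<open>L, M, N, K\<close>. Otherwise \<open>a \<parallel> c\<close> and \<open>b \<parallel> d\<close>, and either \<open>a\<close> and \<open>b\<close> are not parallel, which
  is the degenerate alternative of concyclicity, or all four points lie on one generator; since
  a circle meets a generator only once, consecutive touching points then coincide.\<close>

lemma laguerre_plane_par_euclidean:
  assumes "laguerre_plane P C par" and "par x y" and "par x z"
  shows "par y z"
proof -
  have "equiv P {(x, y). x \<in> P \<and> y \<in> P \<and> par x y}"
    using assms(1) unfolding laguerre_plane_def by (elim conjE)
  then have sym: "sym {(x, y). x \<in> P \<and> y \<in> P \<and> par x y}"
    and trans: "trans {(x, y). x \<in> P \<and> y \<in> P \<and> par x y}"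
    by (blast elim: equivE)+
  have "\<forall>x y. par x y \<longrightarrow> x \<in> P \<and> y \<in> P"
    using assms(1) unfolding laguerre_plane_def by (elim conjE)
  with assms(2,3) have "x \<in> P" "y \<in> P" "z \<in> P"
    by blast+
  with assms(2,3) have "par y x"
    using symD[OF sym] by blast
  with assms(3) show ?thesis
    using transD[OF trans] \<open>x \<in> P\<close> \<open>y \<in> P\<close> \<open>z \<in> P\<close> by blast
qed

lemma laguerre_plane_par_circle_eq:
  assumes "laguerre_plane P C par" and "K \<in> C" and "x \<in> K" and "y \<in> K" and "par x y"
  shows "x = y"
proof -
  have "\<forall>K\<in>C. K \<subseteq> P"
    using assms(1) unfolding laguerre_plane_def by (elim conjE)
  with assms(2,4) have "y \<in> P"
    by blast
  have unique_par: "\<forall>p\<in>P. \<forall>K\<in>C. \<exists>!q. q \<in> K \<and> par q p"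
    using assms(1) unfolding laguerre_plane_def by (elim conjE)
  have "par y y"
    using laguerre_plane_par_euclidean[OF assms(1,5,5)] .
  with assms(3-5) show ?thesis
    using unique_par[rule_format, OF \<open>y \<in> P\<close> assms(2)] by (metis ex1E)
qed

lemma axiom_SD:
  assumes "axiom_S P C par" and "K \<in> C" "L \<in> C" "M \<in> C" "N \<in> C"
    and "K \<inter> L = {a}" "L \<inter> M = {b}" "M \<inter> N = {c}" "N \<inter> K = {d}" and "\<not> par a c"
  shows "\<exists>Z\<in>C. a \<in> Z \<and> b \<in> Z \<and> c \<in> Z \<and> d \<in> Z"
  using assms(1-5) unfolding axiom_S_def by (elim ballE allE impE) (use assms(6-10) in auto)

lemma touching_points_eq_if_par:
  assumes "laguerre_plane P C par" and "L \<in> C" and "M \<in> C" and "N \<in> C"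
    and "a \<in> L" and "L \<inter> M = {b}" and "M \<inter> N = {c}" and "d \<in> N"
    and "par a b" and "par b c" and "par c d"
  shows "a = b \<and> b = c \<and> c = d"
proof -
  have "a = b"
    by (rule laguerre_plane_par_circle_eq[OF assms(1,2) _ _ assms(9)]) (use assms(5,6) in blast)+
  moreover have "b = c"
    by (rule laguerre_plane_par_circle_eq[OF assms(1,3) _ _ assms(10)]) (use assms(6,7) in blast)+
  moreover have "c = d"
    by (rule laguerre_plane_par_circle_eq[OF assms(1,4) _ _ assms(11)]) (use assms(7,8) in blast)+
  ultimately show ?thesis
    by blast
qed

theorem corollary2p1:
  fixes P :: "'p set" and C :: "'p set set" and par :: "'p \<Rightarrow> 'p \<Rightarrow> bool"
  assumes "laguerre_plane P C par" and "axiom_C P C par" and "axiom_S P C par"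
    and "K \<in> C" and "L \<in> C" and "M \<in> C" and "N \<in> C"
    and "K \<inter> L = {a}" and "L \<inter> M = {b}" and "M \<inter> N = {c}" and "N \<inter> K = {d}"
  shows "concyclic C par a c b d"
proof (cases "par a c")
  case False
  with axiom_SD[OF assms(3-11)] show ?thesis
    unfolding concyclic_def by blast
next
  case ac: True
  show ?thesis
  proof (cases "par b d")
    case False
    with axiom_SD[OF assms(3,5,6,7,4,9,10,11,8)] show ?thesis
      unfolding concyclic_def by blast
  next
    case bd: True
    show ?thesis
    proof (cases "par a b")
      case False
      with ac bd show ?thesis
        unfolding concyclic_def by blast
    next
      case ab: True
      have bc: "par b c"
        using laguerre_plane_par_euclidean[OF assms(1) ab ac] .
      have cd: "par c d"
        using laguerre_plane_par_euclidean[OF assms(1) bc bd] .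
      have "a = b \<and> b = c \<and> c = d"
        using touching_points_eq_if_par[OF assms(1,5-7) _ assms(9,10) _ ab bc cd] assms(8,11)
        by blast
      with assms(4,8) show ?thesis
        unfolding concyclic_def by blast
    qed
  qed
qed

end
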